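(* Let $\varphi$ be a sentence of $\mathrm{FO}^2[<,\mathcal{EQ}^{\subseteq}]$ in Scott Normal Form $\forall x,y.\,\psi_0(x,y) \wedge \bigwedge_{m=1}^{M} \forall x.\,\exists y.\,\psi_m(x,y)$, using exactly the equivalence symbols $E_1,\dots,E_K$, and let $\boldsymbol{\alpha}$ be the set of all 1-types over the signature of $\varphi$. Let $\mathfrak{A}$ be a finite model of $\varphi$, fix $k \in \{0,1,\dots,K\}$, and let $\mathcal{C}$ be an equivalence class of $E_{k+1}^{\mathfrak{A}}$. Then there exists a subset $\mathcal{D} \subseteq \mathcal{C}$ such that (1) $\mathcal{D}$ is the union of at most $12 \cdot M^3 \cdot |\boldsymbol{\alpha}|$ equivalence classes of $E_k^{\mathfrak{A}}$ contained in $\mathcal{C}$; and (2) $\varphi$ has a model $\mathfrak{B}$ (in the sense of $\mathrm{FO}^2[<,\mathcal{EQ}^{\subseteq}]$) with domain $B = (A \setminus \mathcal{C}) \cup \mathcal{D}$.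
   Context: $\mathrm{FO}^2[<,\mathcal{EQ}^{\subseteq}]$ is two-variable first-order logic (variables $x,y$ only; unary and binary relation symbols, equality, constants, no function symbols) extended with a special symbol $<$ interpreted as a strict linear order and special symbols $E_1, E_2, \dots$ interpreted as equivalence relations with $E_k \subseteq E_{k+1}$. A sentence is in Scott Normal Form if it has the displayed shape where each $\psi_m$ ($0 \le m \le M$) is quantifier-free, constant-free, and uses only relation symbols of arity 1 and 2. Additionally $E_0$ is interpreted as the identity relation and $E_{K+1}$ as the universal relation. A 1-type over a signature is a maximal consistent set of literals over that signature involving only the variable $x$. *)

theory Defs
  imports Main
begin

datatype var = X | Y

datatype atom =
    AEq var var
  | ALess var var
  | AE nat var var
  | AU nat var
  | AR nat var var

datatype fm =
    FTrue
  | Atom atom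
  | Neg fm
  | Conj fm fm
  | Disj fm fm
  | Ex var fm
  | All var fm

fun qfree :: "fm \<Rightarrow> bool" where
  "qfree FTrue = True"
| "qfree (Atom a) = True"
| "qfree (Neg f) = qfree f"
| "qfree (Conj f g) = (qfree f \<and> qfree g)"
| "qfree (Disj f g) = (qfree f \<and> qfree g)"
| "qfree (Ex v f) = False"
| "qfree (All v f) = False"

definition snf :: "fm \<Rightarrow> fm list \<Rightarrow> fm" where
  "snf psi0 psis =
     Conj (All X (All Y psi0)) (foldr (\<lambda>psi acc. Conj (All X (Ex Y psi)) acc) psis FTrue)"

fun atom_eqs :: "atom \<Rightarrow> nat set" where
  "atom_eqs (AE i u w) = {i}"
| "atom_eqs _ = {}"

fun atom_uns :: "atom \<Rightarrow> nat set" where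
  "atom_uns (AU i u) = {i}"
| "atom_uns _ = {}"

fun atom_bins :: "atom \<Rightarrow> nat set" where
  "atom_bins (AR i u w) = {i}"
| "atom_bins _ = {}"

fun fm_atoms :: "fm \<Rightarrow> atom set" where
  "fm_atoms FTrue = {}"
| "fm_atoms (Atom a) = {a}"
| "fm_atoms (Neg f) = fm_atoms f"
| "fm_atoms (Conj f g) = fm_atoms f \<union> fm_atoms g"
| "fm_atoms (Disj f g) = fm_atoms f \<union> fm_atoms g"
| "fm_atoms (Ex v f) = fm_atoms f"
| "fm_atoms (All v f) = fm_atoms f"

definition fm_eqs :: "fm \<Rightarrow> nat set" where
  "fm_eqs f = (\<Union>a\<in>fm_atoms f. atom_eqs a)"

definition fm_uns :: "fm \<Rightarrow> nat set" where
  "fm_uns f = (\<Union>a\<in>fm_atoms f. atom_uns a)"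

definition fm_bins :: "fm \<Rightarrow> nat set" where
  "fm_bins f = (\<Union>a\<in>fm_atoms f. atom_bins a)"

record 'a struct =
  sdom :: "'a set"
  slt :: "'a \<Rightarrow> 'a \<Rightarrow> bool"
  seq :: "nat \<Rightarrow> 'a \<Rightarrow> 'a \<Rightarrow> bool"
  sun :: "nat \<Rightarrow> 'a \<Rightarrow> bool"
  sbin :: "nat \<Rightarrow> 'a \<Rightarrow> 'a \<Rightarrow> bool"

definition equiv_on :: "'a set \<Rightarrow> ('a \<Rightarrow> 'a \<Rightarrow> bool) \<Rightarrow> bool" where
  "equiv_on D R \<longleftrightarrow> (\<forall>a\<in>D. R a a) \<and> (\<forall>a\<in>D. \<forall>b\<in>D. R a b \<longrightarrow> R b a)
     \<and> (\<forall>a\<in>D. \<forall>b\<in>D. \<forall>c\<in>D. R a b \<longrightarrow> R b c \<longrightarrow> R a c)"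

definition wf_struct :: "'a struct \<Rightarrow> bool" where
  "wf_struct S \<longleftrightarrow> sdom S \<noteq> {}
     \<and> (\<forall>a\<in>sdom S. \<not> slt S a a)
     \<and> (\<forall>a\<in>sdom S. \<forall>b\<in>sdom S. \<forall>c\<in>sdom S. slt S a b \<longrightarrow> slt S b c \<longrightarrow> slt S a c)
     \<and> (\<forall>a\<in>sdom S. \<forall>b\<in>sdom S. a \<noteq> b \<longrightarrow> slt S a b \<or> slt S b a)
     \<and> (\<forall>i\<ge>1. equiv_on (sdom S) (seq S i))
     \<and> (\<forall>i\<ge>1. \<forall>a\<in>sdom S. \<forall>b\<in>sdom S. seq S i a b \<longrightarrow> seq S (Suc i) a b)"

fun sat_atom :: "'a struct \<Rightarrow> (var \<Rightarrow> 'a) \<Rightarrow> atom \<Rightarrow> bool" where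
  "sat_atom S v (AEq u w) = (v u = v w)"
| "sat_atom S v (ALess u w) = slt S (v u) (v w)"
| "sat_atom S v (AE i u w) = seq S i (v u) (v w)"
| "sat_atom S v (AU i u) = sun S i (v u)"
| "sat_atom S v (AR i u w) = sbin S i (v u) (v w)"

fun sat :: "'a struct \<Rightarrow> (var \<Rightarrow> 'a) \<Rightarrow> fm \<Rightarrow> bool" where
  "sat S v FTrue = True"
| "sat S v (Atom a) = sat_atom S v a"
| "sat S v (Neg f) = (\<not> sat S v f)"
| "sat S v (Conj f g) = (sat S v f \<and> sat S v g)"
| "sat S v (Disj f g) = (sat S v f \<or> sat S v g)"
| "sat S v (Ex u f) = (\<exists>a\<in>sdom S. sat S (v(u := a)) f)"
| "sat S v (All u f) = (\<forall>a\<in>sdom S. sat S (v(u := a)) f)"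

definition models :: "'a struct \<Rightarrow> fm \<Rightarrow> bool" where
  "models S f \<longleftrightarrow> (\<forall>v. range v \<subseteq> sdom S \<longrightarrow> sat S v f)"

definition x_atoms :: "fm \<Rightarrow> atom set" where
  "x_atoms f = {AEq X X, ALess X X} \<union> {AE i X X | i. i \<in> fm_eqs f}
      \<union> {AU i X | i. i \<in> fm_uns f} \<union> {AR i X X | i. i \<in> fm_bins f}"

type_synonym literal = "bool \<times> atom"

definition x_literals :: "fm \<Rightarrow> literal set" where
  "x_literals f = {(b, a) | b a. a \<in> x_atoms f}"

fun lit_sat :: "'a struct \<Rightarrow> (var \<Rightarrow> 'a) \<Rightarrow> literal \<Rightarrow> bool" where
  "lit_sat S v (b, a) = (sat_atom S v a = b)"

definition consistent_lits :: "literal set \<Rightarrow> bool" where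
  "consistent_lits L \<longleftrightarrow> (\<exists>(S :: nat struct) a. wf_struct S \<and> a \<in> sdom S
      \<and> (\<forall>l\<in>L. lit_sat S (\<lambda>_. a) l))"

definition one_types :: "fm \<Rightarrow> literal set set" where
  "one_types f = {L. L \<subseteq> x_literals f \<and> consistent_lits L
      \<and> (\<forall>L'. L \<subset> L' \<and> L' \<subseteq> x_literals f \<longrightarrow> \<not> consistent_lits L')}"

definition Erel :: "'a struct \<Rightarrow> nat \<Rightarrow> nat \<Rightarrow> 'a \<Rightarrow> 'a \<Rightarrow> bool" where
  "Erel S K k a b = (if k = 0 then a = b else if k = K + 1 then True else seq S k a b)"

definition classes :: "'a struct \<Rightarrow> nat \<Rightarrow> nat \<Rightarrow> 'a set set" where
  "classes S K k = {{b \<in> sdom S. Erel S K k a b} | a. a \<in> sdom S}"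

end

theory Submission
  imports Defs
begin

(*
  Only the E_k-blocks of boundedly many elements of C are kept. For every 1-type t realised in C,
  choose greedily up to 2M elements of type t from pairwise different E_k-blocks, once as far
  right and once as far left in the order as possible. Keep these candidates, their witnesses
  inside C, and the witnesses inside C of every element that is a witness of at least M candidates
  of one family; this costs at most (4M + 8M^2) |alpha| <= 12 M^3 |alpha| blocks.

  If an element x of the substructure has lost its witness w for the m-th conjunct, w lies in C
  but outside the E_k-block of x. A candidate y of the type of w, on the same side of x as w and
  also outside that block, exists among the 2M candidates chosen beyond w; x is related to y by =,
  < and every E_i exactly as to w, so the pair (x, y) can take over the binary relations of (x, w). Because there are 2M candidates per
  family and x is not a witness of M of them, the replacements can be chosen injectively and away
  from pairs whose 2-type is still needed.
*)

lemma wf_structD: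
  assumes "wf_struct S"
  shows "sdom S \<noteq> {}"
    and slt_irrefl: "a \<in> sdom S \<Longrightarrow> \<not> slt S a a"
    and slt_trans: "a \<in> sdom S \<Longrightarrow> b \<in> sdom S \<Longrightarrow> c \<in> sdom S \<Longrightarrow> slt S a b \<Longrightarrow> slt S b c \<Longrightarrow> slt S a c"
    and slt_linear: "a \<in> sdom S \<Longrightarrow> b \<in> sdom S \<Longrightarrow> a \<noteq> b \<Longrightarrow> slt S a b \<or> slt S b a"
    and seq_equiv: "i \<ge> 1 \<Longrightarrow> equiv_on (sdom S) (seq S i)"
    and seq_Suc: "i \<ge> 1 \<Longrightarrow> a \<in> sdom S \<Longrightarrow> b \<in> sdom S \<Longrightarrow> seq S i a b \<Longrightarrow> seq S (Suc i) a b"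
  using assms unfolding wf_struct_def by blast+

lemma slt_asym: "wf_struct S \<Longrightarrow> a \<in> sdom S \<Longrightarrow> b \<in> sdom S \<Longrightarrow> slt S a b \<Longrightarrow> \<not> slt S b a"
  using slt_irrefl[of S a] slt_trans[of S a b a] by blast

lemma seq_refl: "wf_struct S \<Longrightarrow> 1 \<le> i \<Longrightarrow> a \<in> sdom S \<Longrightarrow> seq S i a a"
  using seq_equiv[of S i] unfolding equiv_on_def by blast

lemma seq_sym: "wf_struct S \<Longrightarrow> 1 \<le> i \<Longrightarrow> a \<in> sdom S \<Longrightarrow> b \<in> sdom S \<Longrightarrow> seq S i a b \<Longrightarrow> seq S i b a"
  using seq_equiv[of S i] unfolding equiv_on_def by blast

lemma seq_trans:
  "wf_struct S \<Longrightarrow> 1 \<le> i \<Longrightarrow> a \<in> sdom S \<Longrightarrow> b \<in> sdom S \<Longrightarrow> c \<in> sdom S \<Longrightarrow>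
    seq S i a b \<Longrightarrow> seq S i b c \<Longrightarrow> seq S i a c"
  using seq_equiv[of S i] unfolding equiv_on_def by blast

lemma seq_mono:
  assumes "wf_struct S" "1 \<le> i" "i \<le> j" "a \<in> sdom S" "b \<in> sdom S" "seq S i a b"
  shows "seq S j a b"
  using assms(3)
proof (induction j rule: dec_induct)
  case base
  then show ?case using assms by simp
next
  case (step n)
  then show ?case using assms seq_Suc[of S n a b] by simp
qed

lemma wf_struct_restrict:
  assumes S: "wf_struct S" and "sdom S' \<subseteq> sdom S" "sdom S' \<noteq> {}" "slt S' = slt S" "seq S' = seq S"
  shows "wf_struct S'"
proof -
  have dom: "a \<in> sdom S' \<Longrightarrow> a \<in> sdom S" for a using assms(2) by blast
  have "\<forall>a\<in>sdom S'. \<not> slt S a a"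
    using slt_irrefl[OF S dom] by blast
  moreover have "\<forall>a\<in>sdom S'. \<forall>b\<in>sdom S'. \<forall>c\<in>sdom S'. slt S a b \<longrightarrow> slt S b c \<longrightarrow> slt S a c"
    using slt_trans[OF S dom dom dom] by blast
  moreover have "\<forall>a\<in>sdom S'. \<forall>b\<in>sdom S'. a \<noteq> b \<longrightarrow> slt S a b \<or> slt S b a"
    using slt_linear[OF S dom dom] by blast
  moreover have "\<forall>i\<ge>1. equiv_on (sdom S') (seq S i)"
    unfolding equiv_on_def
    using seq_refl[OF S _ dom] seq_sym[OF S _ dom dom] seq_trans[OF S _ dom dom dom] by blast
  moreover have "\<forall>i\<ge>1. \<forall>a\<in>sdom S'. \<forall>b\<in>sdom S'. seq S i a b \<longrightarrow> seq S (Suc i) a b"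
    using seq_Suc[OF S _ dom dom] by blast
  ultimately show ?thesis
    unfolding wf_struct_def assms(4,5) using assms(3) by blast
qed

lemma Erel_refl: "wf_struct S \<Longrightarrow> a \<in> sdom S \<Longrightarrow> Erel S K j a a"
  unfolding Erel_def using seq_refl[of S j a] by simp

lemma Erel_sym: "wf_struct S \<Longrightarrow> a \<in> sdom S \<Longrightarrow> b \<in> sdom S \<Longrightarrow> Erel S K j a b \<Longrightarrow> Erel S K j b a"
  unfolding Erel_def using seq_sym[of S j a b] by (cases "j = 0") auto

lemma Erel_trans:
  "wf_struct S \<Longrightarrow> a \<in> sdom S \<Longrightarrow> b \<in> sdom S \<Longrightarrow> c \<in> sdom S \<Longrightarrow>
    Erel S K j a b \<Longrightarrow> Erel S K j b c \<Longrightarrow> Erel S K j a c"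
  unfolding Erel_def using seq_trans[of S j a b c] by (cases "j = 0") auto

lemma Erel_Suc:
  "wf_struct S \<Longrightarrow> j \<le> K \<Longrightarrow> a \<in> sdom S \<Longrightarrow> b \<in> sdom S \<Longrightarrow> Erel S K j a b \<Longrightarrow> Erel S K (Suc j) a b"
  unfolding Erel_def using seq_refl[of S "Suc 0" b] seq_Suc[of S j a b] by (cases "j = 0") auto

definition rank :: "'a struct \<Rightarrow> 'a \<Rightarrow> nat" where
  "rank S a = card {b \<in> sdom S. slt S b a}"

definition corank :: "'a struct \<Rightarrow> 'a \<Rightarrow> nat" where
  "corank S a = card {b \<in> sdom S. slt S a b}"

lemma rank_mono:
  assumes "wf_struct S" "finite (sdom S)" "a \<in> sdom S" "b \<in> sdom S" "slt S a b"
  shows "rank S a < rank S b"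
proof -
  have "{c \<in> sdom S. slt S c a} \<subset> {c \<in> sdom S. slt S c b}"
    using assms slt_trans[of S] slt_irrefl[of S] by blast
  then show ?thesis unfolding rank_def using assms(2) by (simp add: psubset_card_mono)
qed

lemma corank_antimono:
  assumes "wf_struct S" "finite (sdom S)" "a \<in> sdom S" "b \<in> sdom S" "slt S a b"
  shows "corank S b < corank S a"
proof -
  have "{c \<in> sdom S. slt S b c} \<subset> {c \<in> sdom S. slt S a c}"
    using assms slt_trans[of S] slt_irrefl[of S] by blast
  then show ?thesis unfolding corank_def using assms(2) by (simp add: psubset_card_mono)
qed

lemma rank_less_iff:
  assumes "wf_struct S" "finite (sdom S)" "a \<in> sdom S" "b \<in> sdom S"
  shows "rank S a < rank S b \<longleftrightarrow> slt S a b"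
proof
  assume less: "rank S a < rank S b"
  then have "a \<noteq> b" by auto
  moreover have "\<not> slt S b a" using rank_mono[OF assms(1,2,4,3)] less by auto
  ultimately show "slt S a b" using slt_linear[OF assms(1,3,4)] by blast
qed (rule rank_mono[OF assms])

lemma corank_less_iff:
  assumes "wf_struct S" "finite (sdom S)" "a \<in> sdom S" "b \<in> sdom S"
  shows "corank S a < corank S b \<longleftrightarrow> slt S b a"
proof
  assume less: "corank S a < corank S b"
  then have "a \<noteq> b" by auto
  moreover have "\<not> slt S a b" using corank_antimono[OF assms] less by auto
  ultimately show "slt S b a" using slt_linear[OF assms(1,3,4)] by blast
qed (rule corank_antimono[OF assms(1,2,4,3)])

lemma slt_if_rank_le:
  assumes "wf_struct S" "finite (sdom S)" "a \<in> sdom S" "b \<in> sdom S" "a \<noteq> b" "rank S a \<le> rank S b"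
  shows "slt S a b"
  using rank_less_iff[OF assms(1,2,4,3)] slt_linear[OF assms(1,3,4,5)] assms(6) by simp

lemma slt_if_corank_le:
  assumes "wf_struct S" "finite (sdom S)" "a \<in> sdom S" "b \<in> sdom S" "a \<noteq> b" "corank S a \<le> corank S b"
  shows "slt S b a"
  using corank_less_iff[OF assms(1,2,4,3)] slt_linear[OF assms(1,3,4,5)] assms(6) by simp

definition asg :: "'b \<Rightarrow> 'b \<Rightarrow> var \<Rightarrow> 'b" where
  "asg a b = (\<lambda>u. case u of X \<Rightarrow> a | Y \<Rightarrow> b)"

lemma fun_upd_X_Y: "(v(X := a))(Y := b) = asg a b"
  by (auto simp: asg_def fun_eq_iff split: var.splits)

lemma sat_foldr_All_Ex:
  "sat S v (foldr (\<lambda>psi acc. Conj (All X (Ex Y psi)) acc) psis FTrue) \<longleftrightarrow>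
    (\<forall>psi\<in>set psis. sat S v (All X (Ex Y psi)))"
  by (induction psis) auto

lemma models_snf_iff:
  assumes "sdom S \<noteq> {}"
  shows "models S (snf psi0 psis) \<longleftrightarrow>
    (\<forall>a\<in>sdom S. \<forall>b\<in>sdom S. sat S (asg a b) psi0) \<and>
    (\<forall>psi\<in>set psis. \<forall>a\<in>sdom S. \<exists>b\<in>sdom S. sat S (asg a b) psi)"
proof -
  obtain a0 where "a0 \<in> sdom S" using assms by blast
  then have "\<exists>v. range v \<subseteq> sdom S" by (intro exI[of _ "\<lambda>_. a0"]) auto
  then show ?thesis
    unfolding models_def snf_def by (simp add: sat_foldr_All_Ex fun_upd_X_Y) blast
qed

lemma sat_qfree_cong:
  assumes "qfree f" "\<And>at. at \<in> fm_atoms f \<Longrightarrow> sat_atom S1 v1 at = sat_atom S2 v2 at"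
  shows "sat S1 v1 f = sat S2 v2 f"
  using assms by (induction f) auto

lemma fm_atoms_snf: "fm_atoms (snf psi0 psis) = fm_atoms psi0 \<union> (\<Union>psi\<in>set psis. fm_atoms psi)"
  unfolding snf_def by (induction psis) auto

lemma finite_fm_atoms: "finite (fm_atoms f)"
  by (induction f) auto

lemma finite_x_atoms: "finite (x_atoms f)"
proof -
  have "finite (atom_eqs a)" "finite (atom_uns a)" "finite (atom_bins a)" for a
    by (cases a; simp)+
  then have "finite (fm_eqs f)" "finite (fm_uns f)" "finite (fm_bins f)"
    unfolding fm_eqs_def fm_uns_def fm_bins_def using finite_fm_atoms by auto
  then show ?thesis unfolding x_atoms_def by auto
qed

lemma finite_one_types: "finite (one_types f)"
proof -
  have "x_literals f \<subseteq> UNIV \<times> x_atoms f" unfolding x_literals_def by auto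
  moreover have "finite (UNIV \<times> x_atoms f :: literal set)" using finite_x_atoms by simp
  ultimately have "finite (x_literals f)" by (rule finite_subset)
  moreover have "one_types f \<subseteq> Pow (x_literals f)" unfolding one_types_def by auto
  ultimately show ?thesis by (meson finite_Pow_iff finite_subset)
qed

definition one_type :: "'a struct \<Rightarrow> fm \<Rightarrow> 'a \<Rightarrow> literal set" where
  "one_type S f a = {(sat_atom S (\<lambda>_. a) at, at) | at. at \<in> x_atoms f}"

lemma one_type_eqD:
  assumes "one_type S f a = one_type S f b" "at \<in> x_atoms f"
  shows "sat_atom S (\<lambda>_. a) at = sat_atom S (\<lambda>_. b) at"
proof -
  have "(sat_atom S (\<lambda>_. a) at, at) \<in> one_type S f b"
    using assms unfolding one_type_def by blast
  then show ?thesis unfolding one_type_def by auto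
qed

lemma one_type_eq_sun: "one_type S f a = one_type S f b \<Longrightarrow> i \<in> fm_uns f \<Longrightarrow> sun S i a = sun S i b"
  using one_type_eqD[of S f a b "AU i X"] unfolding x_atoms_def by auto

lemma one_type_eq_sbin:
  "one_type S f a = one_type S f b \<Longrightarrow> i \<in> fm_bins f \<Longrightarrow> sbin S i a a = sbin S i b b"
  using one_type_eqD[of S f a b "AR i X X"] unfolding x_atoms_def by auto

lemma one_type_in_one_types:
  assumes S: "wf_struct S" and a: "a \<in> sdom S"
  shows "one_type S f a \<in> one_types f"
proof -
  \<comment> \<open>a one-point structure copying the atomic facts of \<open>a\<close> witnesses consistency\<close>
  define S0 :: "nat struct" where "S0 = \<lparr>sdom = {0}, slt = (\<lambda>_ _. False),
     seq = (\<lambda>i _ _. seq S i a a), sun = (\<lambda>i _. sun S i a), sbin = (\<lambda>i _ _. sbin S i a a)\<rparr>"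
  have "wf_struct S0"
    using seq_refl[OF S _ a] unfolding S0_def wf_struct_def equiv_on_def by simp
  moreover have "sat_atom S0 (\<lambda>_. 0) at = sat_atom S (\<lambda>_. a) at" if "at \<in> x_atoms f" for at
    using that slt_irrefl[OF S a] unfolding x_atoms_def S0_def by auto
  then have "\<forall>l\<in>one_type S f a. lit_sat S0 (\<lambda>_. 0) l"
    unfolding one_type_def by auto
  moreover have "0 \<in> sdom S0" by (simp add: S0_def)
  ultimately have "consistent_lits (one_type S f a)"
    unfolding consistent_lits_def by blast
  moreover have "\<not> consistent_lits L"
    if sub: "one_type S f a \<subset> L" and lits: "L \<subseteq> x_literals f" for L
  proof
    assume "consistent_lits L"
    then obtain S' :: "nat struct" and c where c: "\<forall>l\<in>L. lit_sat S' (\<lambda>_. c) l"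
      unfolding consistent_lits_def by blast
    obtain l where l: "l \<in> L" "l \<notin> one_type S f a" using sub by blast
    obtain b at where new: "(b, at) \<in> L" "(b, at) \<notin> one_type S f a"
      using l by (cases l) blast
    then have "at \<in> x_atoms f" using lits unfolding x_literals_def by auto
    then have old: "(sat_atom S (\<lambda>_. a) at, at) \<in> L" and "b \<noteq> sat_atom S (\<lambda>_. a) at"
      using sub new(2) unfolding one_type_def by blast+
    moreover have "lit_sat S' (\<lambda>_. c) (b, at)" "lit_sat S' (\<lambda>_. c) (sat_atom S (\<lambda>_. a) at, at)"
      using c new(1) old by blast+
    ultimately show False by simp
  qed
  moreover have "one_type S f a \<subseteq> x_literals f"
    unfolding one_type_def x_literals_def by auto
  ultimately show ?thesis unfolding one_types_def by blast
qed

definition extremal_transversal ::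
    "'a set \<Rightarrow> ('a \<Rightarrow> 'a \<Rightarrow> bool) \<Rightarrow> ('a \<Rightarrow> nat) \<Rightarrow> nat \<Rightarrow> 'a set \<Rightarrow> bool" where
  "extremal_transversal E R key n Z \<longleftrightarrow> Z \<subseteq> E \<and> card Z \<le> n
     \<and> (\<forall>z\<in>Z. \<forall>z'\<in>Z. R z z' \<longrightarrow> z = z')
     \<and> (\<forall>w\<in>E. (\<forall>z\<in>Z. \<not> R z w) \<longrightarrow> card Z = n \<and> (\<forall>z\<in>Z. key w \<le> key z))"

lemma extremal_transversal_exists:
  assumes "finite E" "\<And>a. a \<in> E \<Longrightarrow> R a a" "\<And>a b. a \<in> E \<Longrightarrow> b \<in> E \<Longrightarrow> R a b \<Longrightarrow> R b a"
  shows "\<exists>Z. extremal_transversal E R key n Z"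
proof (induction n)
  case 0
  show ?case by (rule exI[of _ "{}"]) (simp add: extremal_transversal_def)
next
  case (Suc n)
  then obtain Z where Z: "extremal_transversal E R key n Z" by blast
  define G where "G = {w \<in> E. \<forall>z\<in>Z. \<not> R z w}"
  show ?case
  proof (cases "G = {}")
    case True
    then show ?thesis using Z unfolding extremal_transversal_def G_def by (intro exI[of _ Z]) auto
  next
    case False
    have "finite G" using assms(1) unfolding G_def by simp
    then have "Max (key ` G) \<in> key ` G" using False by simp
    then obtain p where p: "p \<in> G" "key p = Max (key ` G)" by auto
    then have p_max: "key w \<le> key p" if "w \<in> G" for w
      using \<open>finite G\<close> that by simp
    have Z: "Z \<subseteq> E" "card Z \<le> n" "\<And>z z'. z \<in> Z \<Longrightarrow> z' \<in> Z \<Longrightarrow> R z z' \<Longrightarrow> z = z'"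
      "\<And>w. w \<in> G \<Longrightarrow> card Z = n \<and> (\<forall>z\<in>Z. key w \<le> key z)"
      using Z unfolding extremal_transversal_def G_def by auto
    have pE: "p \<in> E" and pZ: "\<And>z. z \<in> Z \<Longrightarrow> \<not> R z p \<and> \<not> R p z"
      using p(1) Z(1) assms(3) unfolding G_def by blast+
    have card_pZ: "card (insert p Z) = Suc (card Z)"
      using pZ assms(2)[OF pE] finite_subset[OF Z(1) assms(1)] by (metis card_insert_disjoint)
    have "\<forall>z\<in>insert p Z. \<forall>z'\<in>insert p Z. R z z' \<longrightarrow> z = z'"
      using Z(3) pZ by blast
    moreover have "card (insert p Z) = Suc n \<and> (\<forall>z\<in>insert p Z. key w \<le> key z)"
      if "w \<in> E" "\<forall>z\<in>insert p Z. \<not> R z w" for w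
    proof -
      have "w \<in> G" using that unfolding G_def by blast
      then show ?thesis using Z(4) p_max card_pZ by simp
    qed
    ultimately have "extremal_transversal E R key (Suc n) (insert p Z)"
      unfolding extremal_transversal_def using Z(1,2) pE card_pZ by simp
    then show ?thesis ..
  qed
qed

lemma card_often_covered_le:
  assumes "finite Ys" "finite Xs" "1 \<le> m" "\<And>d. d \<in> Xs \<Longrightarrow> finite (Wf d) \<and> card (Wf d) \<le> m"
  shows "card {x\<in>Ys. m \<le> card {d\<in>Xs. x \<in> Wf d}} \<le> card Xs"
proof -
  let ?B = "{x\<in>Ys. m \<le> card {d\<in>Xs. x \<in> Wf d}}"
  have "card ?B * m \<le> (\<Sum>x\<in>?B. card {d\<in>Xs. x \<in> Wf d})"
    using sum_mono[of ?B "\<lambda>_. m" "\<lambda>x. card {d\<in>Xs. x \<in> Wf d}"] by simp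
  also have "\<dots> = (\<Sum>x\<in>?B. \<Sum>d\<in>Xs. if x \<in> Wf d then 1 else 0)"
    using assms(2) by (simp add: sum.If_cases Int_def conj_commute)
  also have "\<dots> = (\<Sum>d\<in>Xs. \<Sum>x\<in>?B. if x \<in> Wf d then 1 else 0)"
    by (rule sum.swap)
  also have "\<dots> = (\<Sum>d\<in>Xs. card (?B \<inter> Wf d))"
    using assms(1) by (simp add: sum.If_cases)
  also have "\<dots> \<le> (\<Sum>d\<in>Xs. m)"
    using assms(4) by (intro sum_mono) (meson card_mono inf_le2 le_trans)
  finally have "card ?B * m \<le> card Xs * m" by simp
  then show ?thesis using assms(3) by simp
qed

locale class_reduction =
  fixes psi0 :: fm and psis :: "fm list" and K k :: nat and A :: "'a struct" and C :: "'a set"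
  assumes qfree_psi0: "qfree psi0" and qfree_psis: "\<forall>psi\<in>set psis. qfree psi"
    and psis_nonempty: "length psis \<ge> 1"
    and eqs: "fm_eqs (snf psi0 psis) = {1..K}"
    and wf: "wf_struct A" and fin: "finite (sdom A)" and models: "models A (snf psi0 psis)"
    and k_le: "k \<le> K" and C_class: "C \<in> classes A K (k + 1)"
begin

abbreviation "U \<equiv> sdom A"
abbreviation "M \<equiv> length psis"
abbreviation "phi \<equiv> snf psi0 psis"
abbreviation "lt \<equiv> slt A"
abbreviation "Ek \<equiv> Erel A K k"
abbreviation "tp \<equiv> one_type A phi"

lemma C_eq: obtains c0 where "c0 \<in> U" "C = {b \<in> U. Erel A K (Suc k) c0 b}"
  using C_class unfolding classes_def by auto

lemma C_subset: "C \<subseteq> U"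
  by (rule C_eq) auto

lemma C_nonempty: "C \<noteq> {}"
proof (rule C_eq)
  fix c0 assume "c0 \<in> U" "C = {b \<in> U. Erel A K (Suc k) c0 b}"
  then show ?thesis using Erel_refl[OF wf \<open>c0 \<in> U\<close>, of K "Suc k"] by blast
qed

lemma finite_C: "finite C"
  using C_subset fin by (rule finite_subset)

lemma Erel_Suc_on_C:
  assumes "c \<in> C" "c' \<in> C"
  shows "Erel A K (Suc k) c c'"
proof -
  obtain c0 where c0: "c0 \<in> U" "C = {b \<in> U. Erel A K (Suc k) c0 b}" using C_eq .
  then have "c \<in> U" "c' \<in> U" "Erel A K (Suc k) c0 c" "Erel A K (Suc k) c0 c'"
    using assms by auto
  then show ?thesis using Erel_sym[OF wf c0(1)] Erel_trans[OF wf _ c0(1)] by blast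
qed

lemma Ek_closed_C:
  assumes "x \<in> U" "c \<in> C" "Ek x c"
  shows "x \<in> C"
proof -
  obtain c0 where c0: "c0 \<in> U" "C = {b \<in> U. Erel A K (Suc k) c0 b}" using C_eq .
  have cU: "c \<in> U" using assms(2) C_subset by blast
  have "Erel A K (Suc k) x c" using Erel_Suc[OF wf k_le assms(1) cU assms(3)] .
  then have "Erel A K (Suc k) c0 x"
    using Erel_trans[OF wf c0(1) cU assms(1)] Erel_sym[OF wf assms(1) cU] assms(2) c0(2) by blast
  then show ?thesis using c0(2) assms(1) by blast
qed

lemma Ek_refl: "a \<in> U \<Longrightarrow> Ek a a"
  using Erel_refl[OF wf] .

lemma Ek_sym: "a \<in> U \<Longrightarrow> b \<in> U \<Longrightarrow> Ek a b \<Longrightarrow> Ek b a"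
  using Erel_sym[OF wf] .

lemma Ek_trans: "a \<in> U \<Longrightarrow> b \<in> U \<Longrightarrow> c \<in> U \<Longrightarrow> Ek a b \<Longrightarrow> Ek b c \<Longrightarrow> Ek a c"
  using Erel_trans[OF wf] .

definition block :: "'a \<Rightarrow> 'a set" where
  "block x = {b \<in> U. Ek x b}"

lemma block_self: "x \<in> U \<Longrightarrow> x \<in> block x"
  unfolding block_def using Ek_refl by auto

lemma block_subset_C:
  assumes "x \<in> C"
  shows "block x \<subseteq> C"
proof
  fix b assume "b \<in> block x"
  then have "b \<in> U" "Ek x b" unfolding block_def by auto
  then show "b \<in> C" using Ek_closed_C Ek_sym[of x b] assms C_subset by blast
qed

lemma block_in_classes: "x \<in> U \<Longrightarrow> block x \<in> classes A K k"
  unfolding block_def classes_def by auto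

lemma seq_uniform_on_C:
  assumes x: "x \<in> U" and y: "y \<in> C" and w: "w \<in> C" and "\<not> Ek x y" "\<not> Ek x w"
    and i: "1 \<le> i" "i \<le> K"
  shows "seq A i x y \<longleftrightarrow> seq A i x w"
proof -
  have yU: "y \<in> U" and wU: "w \<in> U" using y w C_subset by auto
  show ?thesis
  proof (cases "Suc k \<le> i")
    case True
    \<comment> \<open>above level \<open>k\<close>, all of \<open>C\<close> lies in one \<open>E\<^sub>i\<close>-class\<close>
    have "seq A (Suc k) y w"
      using Erel_Suc_on_C[OF y w] True i unfolding Erel_def by simp
    then have "seq A i y w" using seq_mono[OF wf _ True yU wU] by simp
    then show ?thesis
      using seq_sym[OF wf i(1) yU wU] seq_trans[OF wf i(1) x yU wU] seq_trans[OF wf i(1) x wU yU]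
      by blast
  next
    case False
    \<comment> \<open>at or below level \<open>k\<close>, \<open>x\<close> is \<open>E\<^sub>i\<close>-related to neither\<close>
    then have "i \<le> k" "Ek = seq A k" using k_le i unfolding Erel_def by auto
    then show ?thesis
      using assms seq_mono[OF wf i(1) \<open>i \<le> k\<close> x yU] seq_mono[OF wf i(1) \<open>i \<le> k\<close> x wU] by auto
  qed
qed

subsection \<open>Witnesses and candidates\<close>

definition wit :: "'a \<Rightarrow> nat \<Rightarrow> 'a" where
  "wit x m = (SOME b. b \<in> U \<and> sat A (asg x b) (psis ! m))"

definition wits :: "'a \<Rightarrow> 'a set" where
  "wits x = wit x ` {..<M}"

lemma models_A:
  "\<forall>a\<in>U. \<forall>b\<in>U. sat A (asg a b) psi0" "\<forall>psi\<in>set psis. \<forall>a\<in>U. \<exists>b\<in>U. sat A (asg a b) psi"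
  using models models_snf_iff[OF wf_structD(1)[OF wf]] by auto

lemma wit_in_U: "x \<in> U \<Longrightarrow> m < M \<Longrightarrow> wit x m \<in> U"
  and sat_wit: "x \<in> U \<Longrightarrow> m < M \<Longrightarrow> sat A (asg x (wit x m)) (psis ! m)"
proof -
  assume "x \<in> U" "m < M"
  then have "\<exists>b. b \<in> U \<and> sat A (asg x b) (psis ! m)"
    using models_A(2) nth_mem by blast
  then have "wit x m \<in> U \<and> sat A (asg x (wit x m)) (psis ! m)"
    unfolding wit_def by (rule someI_ex)
  then show "wit x m \<in> U" "sat A (asg x (wit x m)) (psis ! m)" by auto
qed

lemma wit_in_wits: "m < M \<Longrightarrow> wit x m \<in> wits x"
  unfolding wits_def by simp

lemma card_wits: "finite (wits x) \<and> card (wits x) \<le> M"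
  unfolding wits_def using card_image_le[of "{..<M}" "wit x"] by simp

definition C_type :: "literal set \<Rightarrow> 'a set" where
  "C_type t = {c \<in> C. tp c = t}"

definition right_cands :: "literal set \<Rightarrow> 'a set" where
  "right_cands t = (SOME Z. extremal_transversal (C_type t) Ek (rank A) (2 * M) Z)"

definition left_cands :: "literal set \<Rightarrow> 'a set" where
  "left_cands t = (SOME Z. extremal_transversal (C_type t) Ek (corank A) (2 * M) Z)"

lemma extremal_transversal_C_type: "\<exists>Z. extremal_transversal (C_type t) Ek key n Z"
proof (rule extremal_transversal_exists)
  show "finite (C_type t)" unfolding C_type_def using finite_C by simp
  have "C_type t \<subseteq> U" unfolding C_type_def using C_subset by blast
  then show "a \<in> C_type t \<Longrightarrow> Ek a a" "a \<in> C_type t \<Longrightarrow> b \<in> C_type t \<Longrightarrow> Ek a b \<Longrightarrow> Ek b a"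
    for a b using Ek_refl[of a] Ek_sym[of a b] by blast+
qed

lemma right_cands: "extremal_transversal (C_type t) Ek (rank A) (2 * M) (right_cands t)"
  unfolding right_cands_def using extremal_transversal_C_type by (rule someI_ex)

lemma left_cands: "extremal_transversal (C_type t) Ek (corank A) (2 * M) (left_cands t)"
  unfolding left_cands_def using extremal_transversal_C_type by (rule someI_ex)

definition cands :: "'a set" where
  "cands = (\<Union>t\<in>tp ` C. right_cands t \<union> left_cands t)"

definition crowded_by :: "'a set \<Rightarrow> 'a set" where
  "crowded_by Z = {x \<in> U. M \<le> card {d \<in> Z. x \<in> wits d}}"

definition crowded :: "'a set" where
  "crowded = (\<Union>t\<in>tp ` C. crowded_by (right_cands t) \<union> crowded_by (left_cands t))"

definition selected :: "'a set" where
  "selected = cands \<union> (\<Union>d\<in>cands. wits d \<inter> C) \<union> (\<Union>x\<in>crowded. wits x \<inter> C)"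

definition D :: "'a set" where
  "D = \<Union> (block ` selected)"

definition dom_B :: "'a set" where
  "dom_B = (U - C) \<union> D"

lemma C_type_subset: "C_type t \<subseteq> C"
  unfolding C_type_def by blast

lemma finite_C_type: "finite (C_type t)"
  using finite_C C_type_subset by (rule finite_subset[rotated])

lemma right_cands_subset: "right_cands t \<subseteq> C_type t"
  and card_right_cands: "card (right_cands t) \<le> 2 * M"
  using right_cands unfolding extremal_transversal_def by blast+

lemma left_cands_subset: "left_cands t \<subseteq> C_type t"
  and card_left_cands: "card (left_cands t) \<le> 2 * M"
  using left_cands unfolding extremal_transversal_def by blast+

lemma finite_right_cands: "finite (right_cands t)"
  using finite_C_type right_cands_subset by (rule finite_subset[rotated])

lemma finite_left_cands: "finite (left_cands t)"
  using finite_C_type left_cands_subset by (rule finite_subset[rotated])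

lemma cands_subset_C: "cands \<subseteq> C"
  unfolding cands_def using right_cands_subset left_cands_subset C_type_subset by blast

lemma finite_cands: "finite cands"
  unfolding cands_def using finite_C finite_right_cands finite_left_cands by simp

lemma card_C_types: "card (tp ` C) \<le> card (one_types phi)"
proof (rule card_mono[OF finite_one_types])
  show "tp ` C \<subseteq> one_types phi" using one_type_in_one_types[OF wf] C_subset by blast
qed

lemma card_union_types_le:
  assumes "\<And>t. card (F t) \<le> 4 * M"
  shows "card (\<Union>t\<in>tp ` C. F t) \<le> card (one_types phi) * (4 * M)"
proof -
  have "card (\<Union>t\<in>tp ` C. F t) \<le> (\<Sum>t\<in>tp ` C. card (F t))"
    by (rule card_UN_le) (simp add: finite_C)
  also have "\<dots> \<le> card (tp ` C) * (4 * M)"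
    using sum_mono[of "tp ` C" "\<lambda>t. card (F t)" "\<lambda>_. 4 * M"] assms by simp
  also have "\<dots> \<le> card (one_types phi) * (4 * M)"
    using card_C_types by simp
  finally show ?thesis .
qed

lemma card_cands: "card cands \<le> card (one_types phi) * (4 * M)"
proof -
  have "card (right_cands t \<union> left_cands t) \<le> 4 * M" for t
    using card_Un_le[of "right_cands t" "left_cands t"] card_right_cands[of t] card_left_cands[of t]
    by linarith
  then show ?thesis unfolding cands_def by (rule card_union_types_le)
qed

lemma card_crowded_by: "finite Z \<Longrightarrow> card (crowded_by Z) \<le> card Z"
  unfolding crowded_by_def by (rule card_often_covered_le[where Wf = wits, OF fin _ psis_nonempty card_wits])

lemma card_crowded: "card crowded \<le> card (one_types phi) * (4 * M)"
proof -
  have "card (crowded_by (right_cands t) \<union> crowded_by (left_cands t)) \<le> 4 * M" for t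
    using card_Un_le[of "crowded_by (right_cands t)" "crowded_by (left_cands t)"]
      card_crowded_by[OF finite_right_cands, of t] card_crowded_by[OF finite_left_cands, of t]
      card_right_cands[of t] card_left_cands[of t] by linarith
  then show ?thesis unfolding crowded_def by (rule card_union_types_le)
qed

lemma finite_crowded: "finite crowded"
  unfolding crowded_def crowded_by_def using finite_C fin by simp

lemma card_wits_in_C: "finite Z \<Longrightarrow> card (\<Union>x\<in>Z. wits x \<inter> C) \<le> card Z * M"
proof -
  assume "finite Z"
  then have "card (\<Union>x\<in>Z. wits x \<inter> C) \<le> (\<Sum>x\<in>Z. card (wits x \<inter> C))"
    by (rule card_UN_le)
  also have "\<dots> \<le> (\<Sum>x\<in>Z. M)"
    using card_wits by (intro sum_mono) (meson card_mono inf_le1 le_trans)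
  finally show ?thesis by simp
qed

lemma selected_subset_C: "selected \<subseteq> C"
  unfolding selected_def using cands_subset_C by blast

lemma finite_selected: "finite selected"
  using finite_C selected_subset_C by (rule finite_subset[rotated])

lemma card_selected: "card selected \<le> 12 * M ^ 3 * card (one_types phi)"
proof -
  let ?T = "card (one_types phi)"
  have "card selected \<le> card cands + card (\<Union>d\<in>cands. wits d \<inter> C) + card (\<Union>x\<in>crowded. wits x \<inter> C)"
    unfolding selected_def by (meson card_Un_le add_le_mono le_trans order_refl)
  also have "\<dots> \<le> card cands + card cands * M + card crowded * M"
    using card_wits_in_C[OF finite_cands] card_wits_in_C[OF finite_crowded] by linarith
  also have "\<dots> \<le> ?T * (4 * M) + ?T * (4 * M) * M + ?T * (4 * M) * M"
    using card_cands card_crowded by (intro add_mono mult_right_mono) auto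
  also have "\<dots> = ?T * (4 * M + 8 * M ^ 2)"
    by (simp add: algebra_simps power2_eq_square)
  also have "\<dots> \<le> ?T * (12 * M ^ 3)"
  proof -
    have "M \<le> M ^ 3" "M ^ 2 \<le> M ^ 3"
      using psis_nonempty power_increasing[of 1 3 M] power_increasing[of 2 3 M] by simp_all
    then show ?thesis by simp
  qed
  finally show ?thesis by (simp add: algebra_simps)
qed

lemma D_subset_C: "D \<subseteq> C"
  unfolding D_def using selected_subset_C block_subset_C by blast

lemma selected_subset_D: "selected \<subseteq> D"
  unfolding D_def using selected_subset_C C_subset block_self by blast

lemma dom_B_subset: "dom_B \<subseteq> U"
  unfolding dom_B_def using D_subset_C C_subset by blast

lemma cands_subset_D: "cands \<subseteq> D"
  using selected_subset_D unfolding selected_def by blast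

subsection \<open>Lost witnesses and their replacements\<close>

definition lost :: "'a \<Rightarrow> nat \<Rightarrow> bool" where
  "lost x m \<longleftrightarrow> wit x m \<notin> dom_B"

lemma not_lost_if_wits_kept: "x \<in> U \<Longrightarrow> m < M \<Longrightarrow> wits x \<inter> C \<subseteq> D \<Longrightarrow> \<not> lost x m"
  unfolding lost_def dom_B_def using wit_in_U[of x m] wit_in_wits[of m x] by blast

lemma block_selected_subset_D: "z \<in> selected \<Longrightarrow> block z \<subseteq> D"
  unfolding D_def by blast

definition cands_for :: "'a \<Rightarrow> nat \<Rightarrow> 'a set" where
  "cands_for x m =
     (if lt x (wit x m) then right_cands (tp (wit x m)) else left_cands (tp (wit x m)))"

lemma cands_for_subset_cands: "wit x m \<in> C \<Longrightarrow> cands_for x m \<subseteq> cands"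
  unfolding cands_for_def cands_def by auto

lemma cands_for_subset_C_type: "cands_for x m \<subseteq> C_type (tp (wit x m))"
  unfolding cands_for_def using right_cands_subset left_cands_subset by simp

lemma finite_cands_for: "finite (cands_for x m)"
  unfolding cands_for_def using finite_right_cands finite_left_cands by simp

lemma cands_for_pairwise: "z \<in> cands_for x m \<Longrightarrow> z' \<in> cands_for x m \<Longrightarrow> Ek z z' \<Longrightarrow> z = z'"
  using right_cands left_cands unfolding cands_for_def extremal_transversal_def
  by (cases "lt x (wit x m)") auto

lemma card_cands_for_block_le:
  assumes xU: "x \<in> U"
  shows "card (cands_for x m \<inter> block x) \<le> 1"
proof -
  have "a = a'" if "a \<in> cands_for x m \<inter> block x" "a' \<in> cands_for x m \<inter> block x" for a a'
  proof -
    have "a \<in> U" "a' \<in> U" "Ek x a" "Ek x a'" using that unfolding block_def by auto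
    then have "Ek a a'" using Ek_trans[OF _ xU] Ek_sym[OF xU] by blast
    then show ?thesis using cands_for_pairwise that by blast
  qed
  then show ?thesis using finite_cands_for by (simp add: card_le_Suc0_iff_eq)
qed

lemma card_lost_plus_kept: "card {m. m < M \<and> lost x m} + card {m. m < M \<and> \<not> lost x m} = M"
proof -
  have "{m. m < M \<and> lost x m} \<union> {m. m < M \<and> \<not> lost x m} = {..<M}" by auto
  moreover have "card ({m. m < M \<and> lost x m} \<union> {m. m < M \<and> \<not> lost x m}) =
      card {m. m < M \<and> lost x m} + card {m. m < M \<and> \<not> lost x m}"
    by (rule card_Un_disjoint) auto
  ultimately show ?thesis by simp
qed

context
  fixes x m assumes x: "x \<in> dom_B" and m: "m < M" and lost: "lost x m"
begin

lemma lost_x_in_U: "x \<in> U"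
  using x dom_B_subset by blast

lemma lost_wit_in_C: "wit x m \<in> C" and lost_wit_notin_D: "wit x m \<notin> D"
  using lost wit_in_U[OF lost_x_in_U m] unfolding lost_def dom_B_def by auto

lemma lost_notin_cands: "x \<notin> cands"
  using not_lost_if_wits_kept[OF lost_x_in_U m] lost selected_subset_D
  unfolding selected_def by blast

lemma lost_notin_crowded: "x \<notin> crowded"
  using not_lost_if_wits_kept[OF lost_x_in_U m] lost selected_subset_D
  unfolding selected_def by blast

lemma card_cands_for_witnessed_less: "card {d \<in> cands_for x m. x \<in> wits d} < M"
proof -
  have "tp (wit x m) \<in> tp ` C" using lost_wit_in_C by blast
  then have "x \<notin> crowded_by (cands_for x m)"
    using lost_notin_crowded unfolding crowded_def cands_for_def by auto
  then show ?thesis using lost_x_in_U unfolding crowded_by_def by auto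
qed

lemma lost_wit_not_Ek_selected: "z \<in> selected \<Longrightarrow> \<not> Ek z (wit x m)"
  using block_selected_subset_D[of z] lost_wit_notin_D wit_in_U[OF lost_x_in_U m]
  unfolding block_def by blast

lemma lost_wit_not_Ek: "\<not> Ek x (wit x m)"
proof
  assume Ek: "Ek x (wit x m)"
  have wU: "wit x m \<in> U" using wit_in_U[OF lost_x_in_U m] .
  show False
  proof (cases "x \<in> D")
    case True
    then obtain z where z: "z \<in> selected" "x \<in> block z" unfolding D_def by blast
    then have "z \<in> U" "Ek z x" using selected_subset_C C_subset unfolding block_def by auto
    then have "Ek z (wit x m)" using Ek_trans[OF _ lost_x_in_U wU] Ek by blast
    then show False using lost_wit_not_Ek_selected[OF z(1)] by blast
  next
    case False
    then have "x \<notin> C" using x unfolding dom_B_def by blast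
    then show False using Ek_closed_C[OF lost_x_in_U lost_wit_in_C Ek] by blast
  qed
qed

lemma lost_wit_neq: "wit x m \<noteq> x"
  using lost_wit_not_Ek Ek_refl[OF lost_x_in_U] by auto

lemma lost_cands_for_extremal:
  "card (cands_for x m) = 2 * M \<and>
   (\<forall>z\<in>cands_for x m. if lt x (wit x m) then lt (wit x m) z else lt z (wit x m))"
proof -
  let ?w = "wit x m"
  have w: "?w \<in> C_type (tp ?w)" "?w \<in> U"
    using lost_wit_in_C C_subset unfolding C_type_def by auto
  have "cands_for x m \<subseteq> selected"
    using cands_for_subset_cands[OF lost_wit_in_C] unfolding selected_def by blast
  \<comment> \<open>the block of the lost witness was available to the greedy choice, so all \<open>2M\<close> slots were filled
     with elements at least as far out\<close>
  then have free: "\<forall>z\<in>cands_for x m. \<not> Ek z ?w"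
    using lost_wit_not_Ek_selected by blast
  have neq: "z \<noteq> ?w" if "z \<in> cands_for x m" for z
    using that \<open>cands_for x m \<subseteq> selected\<close> selected_subset_D lost_wit_notin_D by blast
  have zU: "z \<in> U" if "z \<in> cands_for x m" for z
    using that cands_for_subset_C_type[of x m] C_type_subset C_subset by blast
  show ?thesis
  proof (cases "lt x ?w")
    case True
    then have "card (cands_for x m) = 2 * M \<and> (\<forall>z\<in>cands_for x m. rank A ?w \<le> rank A z)"
      using right_cands w(1) free unfolding cands_for_def extremal_transversal_def by simp
    then show ?thesis using True slt_if_rank_le[OF wf fin w(2) zU neq[symmetric]] by simp
  next
    case False
    then have "card (cands_for x m) = 2 * M \<and> (\<forall>z\<in>cands_for x m. corank A ?w \<le> corank A z)"
      using left_cands w(1) free unfolding cands_for_def extremal_transversal_def by simp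
    then show ?thesis using False slt_if_corank_le[OF wf fin w(2) zU neq[symmetric]] by simp
  qed
qed

lemma cands_for_same_side:
  assumes z: "z \<in> cands_for x m"
  shows "(lt x z \<longleftrightarrow> lt x (wit x m)) \<and> (lt z x \<longleftrightarrow> lt (wit x m) x)"
proof -
  let ?w = "wit x m"
  have U: "x \<in> U" "?w \<in> U" "z \<in> U"
    using lost_x_in_U wit_in_U[OF _ m] z cands_for_subset_C_type C_type_subset C_subset
    by blast+
  note asym = slt_asym[OF wf] and trans = slt_trans[OF wf]
  show ?thesis
  proof (cases "lt x ?w")
    case True
    then have "lt ?w z" using lost_cands_for_extremal z by simp
    then show ?thesis using True asym trans U by meson
  next
    case False
    then have "lt z ?w" "lt ?w x"
      using lost_cands_for_extremal z slt_linear[OF wf U(1,2)] lost_wit_neq by auto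
    then show ?thesis using False asym trans U by meson
  qed
qed

end

definition kept_wits :: "'a \<Rightarrow> 'a set" where
  "kept_wits x = wit x ` {m'. m' < M \<and> \<not> lost x m'}"

text \<open>A replacement for \<open>wit x m\<close> must not be an element using \<open>x\<close> as a witness (that pair keeps
  its 2-type), must not be \<open>E\<^sub>k\<close>-related to \<open>x\<close>, and must not be a witness \<open>x\<close> still has.\<close>

definition avail :: "'a \<Rightarrow> nat \<Rightarrow> 'a set" where
  "avail x m = cands_for x m - {d. x \<in> wits d} - block x - kept_wits x"

definition rivals :: "'a \<Rightarrow> nat \<Rightarrow> nat set" where
  "rivals x m = {m'. m' < M \<and> lost x m' \<and> tp (wit x m') = tp (wit x m)
     \<and> (lt x (wit x m') \<longleftrightarrow> lt x (wit x m))}"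

definition repl :: "'a \<Rightarrow> nat \<Rightarrow> 'a" where
  "repl x m = (SOME f. inj_on f (rivals x m) \<and> f ` rivals x m \<subseteq> avail x m) m"

context
  fixes x m assumes x: "x \<in> dom_B" and m: "m < M" and lost: "lost x m"
begin

lemma card_rivals_le_avail: "card (rivals x m) \<le> card (avail x m)"
proof -
  let ?cs = "cands_for x m" and ?users = "{d \<in> cands_for x m. x \<in> wits d}"
  let ?lost = "{m'. m' < M \<and> lost x m'}" and ?kept = "{m'. m' < M \<and> \<not> lost x m'}"
  have card_kept: "card (kept_wits x) \<le> card ?kept"
    unfolding kept_wits_def by (rule card_image_le) simp
  have card_rivals: "card (rivals x m) \<le> card ?lost"
    unfolding rivals_def by (rule card_mono) auto
  let ?parts = "avail x m \<union> ?users \<union> (?cs \<inter> block x) \<union> kept_wits x"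
  have "?cs \<subseteq> ?parts" unfolding avail_def by auto
  moreover have "finite ?parts"
    unfolding avail_def kept_wits_def using finite_cands_for by simp
  ultimately have "card ?cs \<le> card ?parts" by (rule card_mono[rotated])
  also have "\<dots> \<le> card (avail x m) + card ?users + card (?cs \<inter> block x) + card (kept_wits x)"
    using card_Un_le[of "avail x m \<union> ?users \<union> (?cs \<inter> block x)" "kept_wits x"]
      card_Un_le[of "avail x m \<union> ?users" "?cs \<inter> block x"] card_Un_le[of "avail x m" ?users]
    by linarith
  finally show ?thesis
    using lost_cands_for_extremal[OF x m lost, THEN conjunct1] card_cands_for_witnessed_less[OF x m lost]
      card_cands_for_block_le[OF lost_x_in_U[OF x m lost], of m] card_kept card_rivals
      card_lost_plus_kept[of x]
    by linarith
qed

lemma repl_function_exists: "\<exists>f. inj_on f (rivals x m) \<and> f ` rivals x m \<subseteq> avail x m"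
proof -
  have "finite (rivals x m)" unfolding rivals_def by simp
  moreover have "finite (avail x m)" unfolding avail_def using finite_cands_for by simp
  ultimately have "\<exists>f. f ` rivals x m \<subseteq> avail x m \<and> inj_on f (rivals x m)"
    by (rule card_le_inj[OF _ _ card_rivals_le_avail])
  then show ?thesis by blast
qed

lemma repl_in_avail: "repl x m \<in> avail x m"
proof -
  have "m \<in> rivals x m" using m lost unfolding rivals_def by simp
  then show ?thesis using someI_ex[OF repl_function_exists] unfolding repl_def by blast
qed

lemma repl_in_cands_for: "repl x m \<in> cands_for x m"
  using repl_in_avail unfolding avail_def by blast

lemma repl_in_cands: "repl x m \<in> cands"
  using repl_in_cands_for cands_for_subset_cands[OF lost_wit_in_C[OF x m lost]] by blast

lemma repl_in_C: "repl x m \<in> C"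
  using repl_in_cands cands_subset_C by blast

lemma repl_in_dom_B: "repl x m \<in> dom_B"
  using repl_in_cands cands_subset_D unfolding dom_B_def by blast

lemma tp_repl: "tp (repl x m) = tp (wit x m)"
  using repl_in_cands_for cands_for_subset_C_type unfolding C_type_def by blast

lemma repl_same_side: "(lt x (repl x m) \<longleftrightarrow> lt x (wit x m)) \<and> (lt (repl x m) x \<longleftrightarrow> lt (wit x m) x)"
  using cands_for_same_side[OF x m lost repl_in_cands_for] .

lemma repl_notin_kept_wits: "repl x m \<notin> kept_wits x"
  and notin_wits_repl: "x \<notin> wits (repl x m)"
  and repl_not_Ek: "\<not> Ek x (repl x m)"
  using repl_in_avail repl_in_C C_subset unfolding avail_def block_def by auto

end

lemma repl_inj:
  assumes x: "x \<in> dom_B" and m: "m < M" "lost x m" and m': "m' < M" "lost x m'"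
    and eq: "repl x m = repl x m'"
  shows "m = m'"
proof -
  let ?f = "SOME f. inj_on f (rivals x m) \<and> f ` rivals x m \<subseteq> avail x m"
  have "tp (wit x m) = tp (wit x m')" "lt x (wit x m) \<longleftrightarrow> lt x (wit x m')"
    using tp_repl[OF x m] tp_repl[OF x m'] repl_same_side[OF x m] repl_same_side[OF x m'] eq
    by simp_all
  then have same: "rivals x m' = rivals x m" "avail x m' = avail x m"
    and mem: "m \<in> rivals x m" "m' \<in> rivals x m"
    using m m' unfolding rivals_def avail_def cands_for_def by simp_all
  have "inj_on ?f (rivals x m)" using someI_ex[OF repl_function_exists[OF x m]] by blast
  moreover have "?f m = ?f m'" using eq same unfolding repl_def by simp
  ultimately show ?thesis using mem by (rule inj_onD)
qed

subsection \<open>The reduced structure\<close>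

definition replaces :: "'a \<Rightarrow> 'a \<Rightarrow> bool" where
  "replaces x y \<longleftrightarrow> (\<exists>m<M. lost x m \<and> repl x m = y)"

definition replaced_wit :: "'a \<Rightarrow> 'a \<Rightarrow> 'a" where
  "replaced_wit x y = wit x (SOME m. m < M \<and> lost x m \<and> repl x m = y)"

text \<open>The binary relations between \<open>x\<close> and \<open>y\<close> in the reduced structure are those between the
  components of \<open>src x y\<close> in \<open>A\<close>.\<close>

definition src :: "'a \<Rightarrow> 'a \<Rightarrow> 'a \<times> 'a" where
  "src x y = (if replaces x y then (x, replaced_wit x y)
     else if replaces y x then (replaced_wit y x, y) else (x, y))"

definition compatible :: "'a \<Rightarrow> 'a \<Rightarrow> 'a \<Rightarrow> 'a \<Rightarrow> bool" where
  "compatible x y p q \<longleftrightarrow> p \<in> U \<and> q \<in> U \<and> tp p = tp x \<and> tp q = tp y \<and> (p = q \<longleftrightarrow> x = y)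
     \<and> (lt p q \<longleftrightarrow> lt x y) \<and> (lt q p \<longleftrightarrow> lt y x)
     \<and> (\<forall>i. 1 \<le> i \<and> i \<le> K \<longrightarrow> (seq A i p q \<longleftrightarrow> seq A i x y) \<and> (seq A i q p \<longleftrightarrow> seq A i y x))"

lemma compatible_swap: "compatible x y p q \<Longrightarrow> compatible y x q p"
  unfolding compatible_def by auto

lemma compatible_refl: "x \<in> U \<Longrightarrow> y \<in> U \<Longrightarrow> compatible x y x y"
  unfolding compatible_def by auto

lemma compatible_repl:
  assumes x: "x \<in> dom_B" and m: "m < M" "lost x m"
  shows "compatible x (repl x m) x (wit x m)"
proof -
  have xU: "x \<in> U" using lost_x_in_U[OF x m] .
  have yU: "repl x m \<in> U" using repl_in_C[OF x m] C_subset by blast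
  have wU: "wit x m \<in> U" using wit_in_U[OF xU m(1)] .
  have "seq A i x (repl x m) \<longleftrightarrow> seq A i x (wit x m)" if "1 \<le> i" "i \<le> K" for i
    using seq_uniform_on_C[OF xU repl_in_C[OF x m] lost_wit_in_C[OF x m] repl_not_Ek[OF x m]
        lost_wit_not_Ek[OF x m] that] .
  moreover have "seq A i (repl x m) x \<longleftrightarrow> seq A i x (repl x m)"
    and "seq A i (wit x m) x \<longleftrightarrow> seq A i x (wit x m)" if "1 \<le> i" for i
    using seq_sym[OF wf that] xU yU wU by blast+
  moreover have "repl x m \<noteq> x" using repl_not_Ek[OF x m] Ek_refl[OF xU] by auto
  ultimately show ?thesis
    unfolding compatible_def
    using xU wU tp_repl[OF x m] repl_same_side[OF x m] lost_wit_neq[OF x m] by auto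
qed

lemma no_mutual_replacement:
  assumes x: "x \<in> dom_B" and y: "y \<in> dom_B" and "replaces x y"
  shows "\<not> replaces y x"
proof
  assume "replaces y x"
  then obtain m' where m': "m' < M" "lost y m'" unfolding replaces_def by blast
  obtain m where m: "m < M" "lost x m" "repl x m = y" using \<open>replaces x y\<close> unfolding replaces_def by blast
  show False using repl_in_cands[OF x m(1,2)] lost_notin_cands[OF y m'] m(3) by simp
qed

lemma replaced_wit_repl:
  assumes x: "x \<in> dom_B" and m: "m < M" "lost x m"
  shows "replaced_wit x (repl x m) = wit x m"
proof -
  let ?m = "SOME m'. m' < M \<and> lost x m' \<and> repl x m' = repl x m"
  have "\<exists>m'. m' < M \<and> lost x m' \<and> repl x m' = repl x m" using m by blast
  then have "?m < M \<and> lost x ?m \<and> repl x ?m = repl x m" by (rule someI_ex)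
  then have "?m = m" using repl_inj[OF x _ _ m] by blast
  then show ?thesis unfolding replaced_wit_def by simp
qed

lemma compatible_replaced_wit:
  assumes x: "x \<in> dom_B" and "replaces x y"
  shows "compatible x y x (replaced_wit x y)"
proof -
  obtain m where m: "m < M" "lost x m" "repl x m = y"
    using \<open>replaces x y\<close> unfolding replaces_def by blast
  then show ?thesis using compatible_repl[OF x m(1,2)] replaced_wit_repl[OF x m(1,2)] by simp
qed

lemma src_compatible:
  assumes x: "x \<in> dom_B" and y: "y \<in> dom_B" and src: "src x y = (p, q)"
  shows "compatible x y p q"
proof -
  consider "replaces x y" | "replaces y x" | "\<not> replaces x y" "\<not> replaces y x" by blast
  then show ?thesis
  proof cases
    case 1
    then have "p = x" "q = replaced_wit x y" using src unfolding src_def by auto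
    then show ?thesis using compatible_replaced_wit[OF x 1] by simp
  next
    case 2
    then have "\<not> replaces x y" using no_mutual_replacement[OF y x] by blast
    then have "p = replaced_wit y x" "q = y" using 2 src unfolding src_def by auto
    then show ?thesis using compatible_swap[OF compatible_replaced_wit[OF y 2]] by simp
  next
    case 3
    then show ?thesis using src compatible_refl x y dom_B_subset unfolding src_def by auto
  qed
qed

lemma src_swap:
  assumes x: "x \<in> dom_B" and y: "y \<in> dom_B"
  shows "src y x = prod.swap (src x y)"
proof -
  consider "replaces x y" "\<not> replaces y x" | "replaces y x" "\<not> replaces x y"
    | "\<not> replaces x y" "\<not> replaces y x"
    using no_mutual_replacement[OF x y] by blast
  then show ?thesis unfolding src_def by cases simp_all
qed

lemma src_diag:
  assumes x: "x \<in> dom_B"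
  shows "src x x = (x, x)"
proof -
  have "\<not> replaces x x"
    using repl_not_Ek[OF x] Ek_refl[OF dom_B_subset[THEN subsetD, OF x]] unfolding replaces_def by metis
  then show ?thesis unfolding src_def by simp
qed

lemma src_wit:
  assumes x: "x \<in> dom_B" and m: "m < M"
  shows "\<exists>y\<in>dom_B. src x y = (x, wit x m)"
proof (cases "lost x m")
  case True
  have "replaces x (repl x m)" using m True unfolding replaces_def by blast
  then have "src x (repl x m) = (x, wit x m)"
    using replaced_wit_repl[OF x m True] unfolding src_def by simp
  then show ?thesis using repl_in_dom_B[OF x m True] by blast
next
  case False
  let ?y = "wit x m"
  have "\<not> replaces x ?y"
  proof
    assume "replaces x ?y"
    then obtain m' where m': "m' < M" "lost x m'" "repl x m' = ?y" unfolding replaces_def by blast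
    have "?y \<in> kept_wits x" unfolding kept_wits_def using m False by blast
    then show False using repl_notin_kept_wits[OF x m'(1,2)] m'(3) by simp
  qed
  moreover have y_dom: "?y \<in> dom_B" using False unfolding lost_def by simp
  moreover have "\<not> replaces ?y x"
  proof
    assume "replaces ?y x"
    then obtain m' where m': "m' < M" "lost ?y m'" "repl ?y m' = x" unfolding replaces_def by blast
    have "?y \<in> wits x" using wit_in_wits[OF m] .
    then show False using notin_wits_repl[OF y_dom m'(1,2)] m'(3) by simp
  qed
  ultimately show ?thesis unfolding src_def by auto
qed

definition B :: "'a struct" where
  "B = \<lparr>sdom = dom_B, slt = lt, seq = seq A, sun = sun A,
     sbin = (\<lambda>i a b. case src a b of (p, q) \<Rightarrow> sbin A i p q)\<rparr>"

lemma sat_atom_B: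
  assumes at: "at \<in> fm_atoms phi" and x: "x \<in> dom_B" and y: "y \<in> dom_B" and src: "src x y = (p, q)"
  shows "sat_atom B (asg x y) at = sat_atom A (asg p q) at"
proof -
  have pq: "compatible x y p q" using src_compatible[OF x y src] .
  have U: "x \<in> U" "y \<in> U" "p \<in> U" "q \<in> U" using x y dom_B_subset pq unfolding compatible_def by auto
  have tps: "tp p = tp x" "tp q = tp y" using pq unfolding compatible_def by auto
  have sbin_src: "src y x = (q, p)" "src x x = (x, x)" "src y y = (y, y)"
    using src_swap[OF x y] src src_diag[OF x] src_diag[OF y] by simp_all
  have sigs: "atom_eqs at \<subseteq> {1..K}" "atom_uns at \<subseteq> fm_uns phi" "atom_bins at \<subseteq> fm_bins phi"
    using at eqs unfolding fm_eqs_def fm_uns_def fm_bins_def by auto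
  show ?thesis
  proof (cases at)
    case (AEq u w)
    then show ?thesis using pq unfolding compatible_def by (cases u; cases w) (auto simp: asg_def B_def)
  next
    case (ALess u w)
    then show ?thesis using pq slt_irrefl[OF wf] U unfolding compatible_def
      by (cases u; cases w) (auto simp: asg_def B_def)
  next
    case (AE i u w)
    then have "1 \<le> i" "i \<le> K" using sigs by auto
    then show ?thesis using AE pq seq_refl[OF wf \<open>1 \<le> i\<close>] U unfolding compatible_def
      by (cases u; cases w) (auto simp: asg_def B_def)
  next
    case (AU i u)
    then have "i \<in> fm_uns phi" using sigs by auto
    then show ?thesis using AU one_type_eq_sun[OF tps(1)] one_type_eq_sun[OF tps(2)]
      by (cases u) (auto simp: asg_def B_def)
  next
    case (AR i u w)
    then have "i \<in> fm_bins phi" using sigs by auto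
    then show ?thesis using AR src sbin_src one_type_eq_sbin[OF tps(1)] one_type_eq_sbin[OF tps(2)]
      by (cases u; cases w) (auto simp: asg_def B_def)
  qed
qed

lemma sat_B:
  assumes "qfree f" "fm_atoms f \<subseteq> fm_atoms phi" "x \<in> dom_B" "y \<in> dom_B" "src x y = (p, q)"
  shows "sat B (asg x y) f = sat A (asg p q) f"
proof (rule sat_qfree_cong[OF assms(1)])
  fix at assume "at \<in> fm_atoms f"
  then show "sat_atom B (asg x y) at = sat_atom A (asg p q) at"
    using assms(2) sat_atom_B[OF _ assms(3-5)] by blast
qed

lemma cands_nonempty: "cands \<noteq> {}"
proof -
  obtain c where c: "c \<in> C" using C_nonempty by blast
  then have "c \<in> C_type (tp c)" unfolding C_type_def by simp
  then have "right_cands (tp c) \<noteq> {}"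
    using right_cands psis_nonempty unfolding extremal_transversal_def by fastforce
  then show ?thesis using c unfolding cands_def by blast
qed

lemma wf_B: "wf_struct B"
proof (rule wf_struct_restrict[OF wf])
  show "sdom B \<subseteq> U" "slt B = lt" "seq B = seq A" unfolding B_def using dom_B_subset by simp_all
  show "sdom B \<noteq> {}"
    using cands_nonempty cands_subset_D unfolding B_def dom_B_def by auto
qed

lemma models_B: "models B phi"
proof -
  have dom: "sdom B = dom_B" "sdom B \<noteq> {}"
    using wf_structD(1)[OF wf_B] unfolding B_def by simp_all
  have "sat B (asg a b) psi0" if "a \<in> dom_B" "b \<in> dom_B" for a b
  proof -
    obtain p q where src: "src a b = (p, q)" by fastforce
    then have "p \<in> U" "q \<in> U" using src_compatible[OF that src] unfolding compatible_def by auto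
    then have "sat A (asg p q) psi0" using models_A(1) by blast
    moreover have "fm_atoms psi0 \<subseteq> fm_atoms phi" unfolding fm_atoms_snf by blast
    ultimately show ?thesis using sat_B[OF qfree_psi0 _ that src] by simp
  qed
  moreover have "\<exists>b\<in>dom_B. sat B (asg a b) psi" if "psi \<in> set psis" "a \<in> dom_B" for psi a
  proof -
    obtain m where m: "m < M" "psi = psis ! m" using \<open>psi \<in> set psis\<close> by (metis in_set_conv_nth)
    obtain b where b: "b \<in> dom_B" "src a b = (a, wit a m)" using src_wit[OF \<open>a \<in> dom_B\<close> m(1)] by blast
    have "sat A (asg a (wit a m)) psi" using sat_wit dom_B_subset \<open>a \<in> dom_B\<close> m by blast
    moreover have "fm_atoms psi \<subseteq> fm_atoms phi" using that(1) unfolding fm_atoms_snf by blast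
    moreover have "qfree psi" using qfree_psis that(1) by blast
    ultimately show ?thesis using sat_B[OF _ _ \<open>a \<in> dom_B\<close> b] b(1) by blast
  qed
  ultimately show ?thesis unfolding models_snf_iff[OF dom(2)] dom(1) by blast
qed

end

theorem lemma1:
  fixes psi0 :: fm and psis :: "fm list" and K k :: nat
    and A :: "'a struct" and C :: "'a set"
  assumes "qfree psi0" and "\<forall>psi\<in>set psis. qfree psi" and "length psis \<ge> 1"
    and "fm_eqs (snf psi0 psis) = {1..K}"
    and "wf_struct A" and "finite (sdom A)" and "models A (snf psi0 psis)"
    and "k \<le> K" and "C \<in> classes A K (k + 1)"
  shows "\<exists>D \<subseteq> C.
           (\<exists>F. F \<subseteq> classes A K k \<and> (\<forall>Z\<in>F. Z \<subseteq> C)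
                \<and> card F \<le> 12 * (length psis) ^ 3 * card (one_types (snf psi0 psis))
                \<and> D = \<Union>F)
         \<and> (\<exists>B :: 'a struct. wf_struct B \<and> sdom B = (sdom A - C) \<union> D
                \<and> models B (snf psi0 psis))"
proof -
  interpret class_reduction psi0 psis K k A C
    using assms by unfold_locales
  show ?thesis
  proof (intro exI conjI)
    show "D \<subseteq> C" by (rule D_subset_C)
    show "block ` selected \<subseteq> classes A K k"
      using block_in_classes selected_subset_C C_subset by blast
    show "\<forall>Z\<in>block ` selected. Z \<subseteq> C"
      using block_subset_C selected_subset_C by blast
    show "card (block ` selected) \<le> 12 * M ^ 3 * card (one_types phi)"
      using card_image_le[OF finite_selected, of block] card_selected by linarith
    show "D = \<Union> (block ` selected)" unfolding D_def ..
    show "wf_struct B" by (rule wf_B)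
    show "sdom B = (U - C) \<union> D" unfolding B_def dom_B_def by simp
    show "models B phi" by (rule models_B)
  qed
qed

end
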